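(* Let Assumptions 1 and 2 hold and $\eta>0$. Let $u_1,\dots,u_T\in\mathbb{R}^N$ be arbitrary payoff vectors and $\beta_1,\dots,\beta_T\in\mathbb{R}^N$ any predictions with $\beta_t$ allowed to depend on $u_1,\dots,u_{t-1}$. Let the OFTRL choices be $x_t=\arg\max_{x\in\Delta_N}\{\langle\theta_{t-1}+\beta_t,x\rangle-\mathcal R(x)\}=\nabla\varphi_\eta(\theta_{t-1}+\beta_t)$, $t=1,\dots,T$. Then for every $x^*\in\Delta_N$, $$\sum_{t=1}^T\langle x^*-x_t,u_t\rangle\le\eta\,\varphi_1(0)+\frac{L}{2\eta}\sum_{t=1}^T\|u_t-\beta_t\|_\infty^2 .$$
   Context: Let $N\ge 2$, $A=\{1,\dots,N\}$, and $\Delta_N=\{x\in\mathbb{R}^N: x_i\ge 0,\ \sum_i x_i=1\}$. Let $\epsilon=(\epsilon_1,\dots,\epsilon_N)$ be a random vector satisfying Assumption 1: each $\epsilon_i$ is integrable with $\mathbb{E}[\epsilon_i]=0$, and the law of $\epsilon$ is absolutely continuous with respect to Lebesgue measure on $\mathbb{R}^N$ with support all of $\mathbb{R}^N$. For $\eta>0$ the social surplus function is $\varphi_\eta(\theta)=\mathbb{E}[\max_{j\in A}(\theta_j+\eta\epsilon_j)]$, $\theta\in\mathbb{R}^N$; thus $\varphi_\eta(\theta)=\eta\varphi_1(\theta/\eta)$, and $\varphi_1(0)=\mathbb{E}[\max_i\epsilon_i]$. $\varphi_\eta$ is convex and differentiable with $\nabla\varphi_\eta(\theta)\in\Delta_N$.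 Assumption 2: $\varphi_1$ is twice continuously differentiable and there is a constant $L>0$ with $2\,\mathrm{tr}(\nabla^2\varphi_1(\theta))\le L$ for all $\theta\in\mathbb{R}^N$. Set $\theta_0=0$, $\theta_t=\sum_{s=1}^tu_s$. Regularizer: $\mathcal R(x)=\sup_{\theta\in\mathbb{R}^N}\{\langle\theta,x\rangle-\varphi_\eta(\theta)\}$ for $x\in\Delta_N$. *)

theory Defs
  imports "HOL-Analysis.Analysis" "HOL-Probability.Probability"
begin

definition surplus :: "'a measure \<Rightarrow> ('a \<Rightarrow> real^'n) \<Rightarrow> real \<Rightarrow> real^'n \<Rightarrow> real" where
  "surplus M eps \<eta> \<theta> = (\<integral>\<omega>. (MAX j. \<theta> $ j + \<eta> * (eps \<omega> $ j)) \<partial>M)"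

definition noise_assumption :: "'a measure \<Rightarrow> ('a \<Rightarrow> real^'n) \<Rightarrow> bool" where
  "noise_assumption M eps \<longleftrightarrow>
     prob_space M \<and> eps \<in> borel_measurable M \<and>
     (\<forall>i. integrable M (\<lambda>\<omega>. eps \<omega> $ i) \<and> (\<integral>\<omega>. eps \<omega> $ i \<partial>M) = 0) \<and>
     absolutely_continuous lborel (distr M borel eps) \<and>
     (\<forall>U. open U \<and> U \<noteq> {} \<longrightarrow> measure M (eps -` U \<inter> space M) > 0)"

definition C2_with :: "(real^'n \<Rightarrow> real) \<Rightarrow> (real^'n \<Rightarrow> real^'n) \<Rightarrow> (real^'n \<Rightarrow> real^'n^'n) \<Rightarrow> bool" where
  "C2_with f g H \<longleftrightarrow>
     (\<forall>\<theta>. (f has_derivative (\<lambda>h. g \<theta> \<bullet> h)) (at \<theta>)) \<and>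
     (\<forall>\<theta>. (g has_derivative (\<lambda>h. H \<theta> *v h)) (at \<theta>)) \<and>
     continuous_on UNIV H"

definition hessian_trace_bound :: "'a measure \<Rightarrow> ('a \<Rightarrow> real^'n) \<Rightarrow> real \<Rightarrow> bool" where
  "hessian_trace_bound M eps L \<longleftrightarrow> L > 0 \<and>
     (\<exists>g H. C2_with (surplus M eps 1) g H \<and> (\<forall>\<theta>. 2 * trace (H \<theta>) \<le> L))"

definition prob_simplex :: "(real^'n) set" where
  "prob_simplex = {x. (\<forall>i. x $ i \<ge> 0) \<and> sum (\<lambda>i. x $ i) UNIV = 1}"

end

theory Submission
  imports Defs
begin

text \<open>
  OFTRL with the regulariser conjugate to the convex potential \<open>\<phi>\<^sub>\<eta>\<close> plays
  \<open>x\<^sub>t = \<nabla>\<phi>\<^sub>\<eta>(\<theta>\<^sub>t\<^sub>-\<^sub>1 + \<beta>\<^sub>t)\<close>, so the regret telescopes: the first-order convexity inequality at the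
  predicted point and smoothness of \<open>\<phi>\<^sub>\<eta>\<close> with respect to the sup-norm give
  \<open>\<phi>\<^sub>\<eta>(\<theta>\<^sub>t) \<le> \<phi>\<^sub>\<eta>(\<theta>\<^sub>t\<^sub>-\<^sub>1) + \<langle>x\<^sub>t, u\<^sub>t\<rangle> + L/(2\<eta>) \<parallel>u\<^sub>t - \<beta>\<^sub>t\<parallel>\<^sup>2\<close>, and \<open>\<langle>x\<^sup>*, \<theta>\<^sub>T\<rangle> \<le> \<phi>\<^sub>\<eta>(\<theta>\<^sub>T)\<close>
  because the noise has mean zero.
  The sup-norm smoothness comes from the Hessian of \<open>\<phi>\<^sub>1\<close>: its rows sum to zero because
  \<open>\<phi>\<^sub>1(\<theta> + c\<one>) = \<phi>\<^sub>1(\<theta>) + c\<close>, and its off-diagonal entries are nonpositive because the maximum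
  of the coordinates has decreasing differences; such a matrix \<open>A\<close> satisfies
  \<open>e\<^sup>T A e \<le> 2 tr(A) \<parallel>e\<parallel>\<^sub>\<infinity>\<^sup>2\<close>.
\<close>

lemma has_real_derivative_along_line:
  fixes f :: "'a::real_normed_vector \<Rightarrow> real"
  assumes "(f has_derivative f') (at (a + s *\<^sub>R v))"
  shows "((\<lambda>s. f (a + s *\<^sub>R v)) has_real_derivative f' v) (at s)"
proof -
  have "((\<lambda>s. a + s *\<^sub>R v) has_derivative (\<lambda>h. h *\<^sub>R v)) (at s)"
    by (auto intro!: derivative_eq_intros)
  from diff_chain_at[OF this assms]
  have "((\<lambda>s. f (a + s *\<^sub>R v)) has_derivative (\<lambda>h. f' (h *\<^sub>R v))) (at s)"
    by (simp add: o_def)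
  moreover have "f' (h *\<^sub>R v) = f' v * h" for h
    using has_derivative_linear[OF assms] by (simp add: linear_scale)
  ultimately show ?thesis
    by (simp add: has_field_derivative_def)
qed

lemma deriv_nonneg_at_right_min:
  fixes k :: "real \<Rightarrow> real"
  assumes "(k has_real_derivative D) (at 0)" and "\<And>s. 0 < s \<Longrightarrow> k 0 \<le> k s"
  shows "D \<ge> 0"
proof (rule ccontr)
  assume "\<not> D \<ge> 0"
  with has_real_derivative_neg_dec_right[OF assms(1)]
  obtain d where "d > 0" and "\<forall>h>0. h < d \<longrightarrow> k h < k 0"
    by auto
  then have "k (d / 2) < k 0" by simp
  with assms(2)[of "d / 2"] \<open>d > 0\<close> show False by simp
qed

lemma convex_on_gradient_inequality:
  fixes F :: "'a::real_normed_vector \<Rightarrow> real"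
  assumes "convex_on UNIV F" and "(F has_derivative F') (at y)"
  shows "F y + F' (z - y) \<le> F z"
proof -
  let ?k = "\<lambda>s. F (y + s *\<^sub>R (z - y))"
  have "convex_on UNIV ?k"
  proof (rule convex_onI)
    fix t :: real and a b assume "0 < t" "t < 1"
    have "y + ((1 - t) *\<^sub>R a + t *\<^sub>R b) *\<^sub>R (z - y)
        = (1 - t) *\<^sub>R (y + a *\<^sub>R (z - y)) + t *\<^sub>R (y + b *\<^sub>R (z - y))"
      by (simp add: algebra_simps)
    then show "?k ((1 - t) *\<^sub>R a + t *\<^sub>R b) \<le> (1 - t) * ?k a + t * ?k b"
      using convex_onD[OF assms(1), of t] \<open>0 < t\<close> \<open>t < 1\<close> by simp
  qed simp
  moreover have "(?k has_real_derivative F' (z - y)) (at 0)"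
    by (rule has_real_derivative_along_line) (simp add: assms(2))
  ultimately have "?k 1 - ?k 0 \<ge> F' (z - y) * (1 - 0)"
    by (intro convex_on_imp_above_tangent) (auto simp: has_field_derivative_at_within)
  then show ?thesis by simp
qed

lemma convex_on_shift:
  fixes f :: "'a::real_vector \<Rightarrow> real"
  assumes "convex_on UNIV f"
  shows "convex_on UNIV (\<lambda>x. f (x + c))"
proof (rule convex_onI)
  fix t :: real and x y assume "0 < t" "t < 1"
  have "(1 - t) *\<^sub>R x + t *\<^sub>R y + c = (1 - t) *\<^sub>R (x + c) + t *\<^sub>R (y + c)"
    by (simp add: algebra_simps)
  then show "f ((1 - t) *\<^sub>R x + t *\<^sub>R y + c) \<le> (1 - t) * f (x + c) + t * f (y + c)"
    using convex_onD[OF assms, of t] \<open>0 < t\<close> \<open>t < 1\<close> by simp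
qed simp

lemma convex_on_integral:
  assumes convex: "\<And>\<omega>. convex_on S (\<lambda>x. f x \<omega>)" and integrable: "\<And>x. x \<in> S \<Longrightarrow> integrable M (f x)"
  shows "convex_on S (\<lambda>x. \<integral>\<omega>. f x \<omega> \<partial>M)"
proof (rule convex_onI)
  show "convex S" using convex by (rule convex_on_imp_convex)
  fix t :: real and x y assume "0 < t" "t < 1" "x \<in> S" "y \<in> S"
  with \<open>convex S\<close> have "(1 - t) *\<^sub>R x + t *\<^sub>R y \<in> S"
    by (simp add: convex_alt)
  with \<open>0 < t\<close> \<open>t < 1\<close> \<open>x \<in> S\<close> \<open>y \<in> S\<close>
  have "(\<integral>\<omega>. f ((1 - t) *\<^sub>R x + t *\<^sub>R y) \<omega> \<partial>M) \<le> (\<integral>\<omega>. (1 - t) * f x \<omega> + t * f y \<omega> \<partial>M)"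
    by (intro integral_mono convex_onD[OF convex] integrable
        Bochner_Integration.integrable_add integrable_mult_right) auto
  also have "\<dots> = (1 - t) * (\<integral>\<omega>. f x \<omega> \<partial>M) + t * (\<integral>\<omega>. f y \<omega> \<partial>M)"
    using integrable \<open>x \<in> S\<close> \<open>y \<in> S\<close> by simp
  finally show "(\<integral>\<omega>. f ((1 - t) *\<^sub>R x + t *\<^sub>R y) \<omega> \<partial>M)
      \<le> (1 - t) * (\<integral>\<omega>. f x \<omega> \<partial>M) + t * (\<integral>\<omega>. f y \<omega> \<partial>M)" .
qed

definition decreasing_differences :: "(real^'n \<Rightarrow> real) \<Rightarrow> bool" where
  "decreasing_differences f \<longleftrightarrow>
     (\<forall>\<theta> i j s t. i \<noteq> j \<longrightarrow> 0 \<le> s \<longrightarrow> 0 \<le> t \<longrightarrow>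
        f (\<theta> + s *\<^sub>R axis i 1 + t *\<^sub>R axis j 1) + f \<theta>
          \<le> f (\<theta> + s *\<^sub>R axis i 1) + f (\<theta> + t *\<^sub>R axis j 1))"

lemma decreasing_differences_shift:
  fixes f :: "real^'n \<Rightarrow> real"
  assumes "decreasing_differences f"
  shows "decreasing_differences (\<lambda>\<theta>. f (\<theta> + c))"
  unfolding decreasing_differences_def
proof (intro allI impI)
  fix \<theta> :: "real^'n" and i j :: 'n and s t :: real
  assume "i \<noteq> j" "0 \<le> s" "0 \<le> t"
  with assms have "f (\<theta> + c + s *\<^sub>R axis i 1 + t *\<^sub>R axis j 1) + f (\<theta> + c)
      \<le> f (\<theta> + c + s *\<^sub>R axis i 1) + f (\<theta> + c + t *\<^sub>R axis j 1)"
    unfolding decreasing_differences_def by blast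
  then show "f (\<theta> + s *\<^sub>R axis i 1 + t *\<^sub>R axis j 1 + c) + f (\<theta> + c)
      \<le> f (\<theta> + s *\<^sub>R axis i 1 + c) + f (\<theta> + t *\<^sub>R axis j 1 + c)"
    by (simp add: add_ac)
qed

lemma decreasing_differences_integral:
  fixes f :: "real^'n \<Rightarrow> 'a \<Rightarrow> real"
  assumes "\<And>\<omega>. decreasing_differences (\<lambda>\<theta>. f \<theta> \<omega>)" and "\<And>\<theta>. integrable M (f \<theta>)"
  shows "decreasing_differences (\<lambda>\<theta>. \<integral>\<omega>. f \<theta> \<omega> \<partial>M)"
  unfolding decreasing_differences_def
proof (intro allI impI)
  fix \<theta> :: "real^'n" and i j :: 'n and s t :: real
  assume "i \<noteq> j" "0 \<le> s" "0 \<le> t"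
  then have "(\<integral>\<omega>. f (\<theta> + s *\<^sub>R axis i 1 + t *\<^sub>R axis j 1) \<omega> + f \<theta> \<omega> \<partial>M)
      \<le> (\<integral>\<omega>. f (\<theta> + s *\<^sub>R axis i 1) \<omega> + f (\<theta> + t *\<^sub>R axis j 1) \<omega> \<partial>M)"
    using assms by (intro integral_mono) (auto simp: decreasing_differences_def)
  then show "(\<integral>\<omega>. f (\<theta> + s *\<^sub>R axis i 1 + t *\<^sub>R axis j 1) \<omega> \<partial>M) + (\<integral>\<omega>. f \<theta> \<omega> \<partial>M)
      \<le> (\<integral>\<omega>. f (\<theta> + s *\<^sub>R axis i 1) \<omega> \<partial>M) + (\<integral>\<omega>. f (\<theta> + t *\<^sub>R axis j 1) \<omega> \<partial>M)"
    using assms(2) by simp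
qed

context
  fixes f :: "real^'n \<Rightarrow> real" and g :: "real^'n \<Rightarrow> real^'n" and H :: "real^'n \<Rightarrow> real^'n^'n"
  assumes f_deriv: "\<And>\<theta>. (f has_derivative (\<lambda>h. g \<theta> \<bullet> h)) (at \<theta>)"
    and g_deriv: "\<And>\<theta>. (g has_derivative (\<lambda>h. H \<theta> *v h)) (at \<theta>)"
begin

lemma gradient_component_along_line:
  "((\<lambda>s. g (a + s *\<^sub>R v) $ i) has_real_derivative (H (a + s *\<^sub>R v) *v v) $ i) (at s)"
  by (rule has_real_derivative_along_line[OF bounded_linear.has_derivative[OF bounded_linear_vec_nth g_deriv]])

lemma gradient_add_const:
  assumes "\<And>\<theta> c. f (\<theta> + (\<chi> k. c)) = f \<theta> + c"
  shows "g (\<theta> + (\<chi> k. c)) = g \<theta>"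
proof -
  have "((\<lambda>x. f (x + (\<chi> k. c))) has_derivative (\<lambda>h. g (\<theta> + (\<chi> k. c)) \<bullet> h)) (at \<theta>)"
    by (rule has_derivative_compose[OF has_derivative_add_const[OF has_derivative_ident] f_deriv])
  moreover have "((\<lambda>x. f (x + (\<chi> k. c))) has_derivative (\<lambda>h. g \<theta> \<bullet> h)) (at \<theta>)"
    unfolding assms by (rule has_derivative_add_const[OF f_deriv])
  ultimately have "(\<lambda>h. g (\<theta> + (\<chi> k. c)) \<bullet> h) = (\<lambda>h. g \<theta> \<bullet> h)"
    by (rule has_derivative_unique)
  then show ?thesis by (metis vector_eq_rdot)
qed

lemma hessian_mult_ones_eq_zero:
  assumes "\<And>\<theta> c. f (\<theta> + (\<chi> k. c)) = f \<theta> + c"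
  shows "H \<theta> *v (\<chi> k. 1) = 0"
proof -
  have "(H \<theta> *v (\<chi> k. 1)) $ i = 0" for i
  proof -
    have "s *\<^sub>R (\<chi> k. 1) = ((\<chi> k. s) :: real^'n)" for s
      by (simp add: vec_eq_iff)
    then have "g (\<theta> + s *\<^sub>R (\<chi> k. 1)) = g \<theta>" for s
      by (simp add: gradient_add_const[OF assms])
    then have "((\<lambda>s. g \<theta> $ i) has_real_derivative (H \<theta> *v (\<chi> k. 1)) $ i) (at 0)"
      using gradient_component_along_line[where a=\<theta> and s=0 and v="\<chi> k. 1" and i=i] by simp
    then show ?thesis by (rule DERIV_unique[OF _ DERIV_const])
  qed
  then show ?thesis by (simp add: vec_eq_iff)
qed

lemma gradient_cross_antimono:
  assumes "decreasing_differences f" "i \<noteq> j" "t \<ge> 0"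
  shows "g (\<theta> + t *\<^sub>R axis j 1) $ i \<le> g \<theta> $ i"
proof -
  let ?\<theta>' = "\<theta> + t *\<^sub>R axis j 1"
  let ?k = "\<lambda>s. (f (\<theta> + s *\<^sub>R axis i 1) - f \<theta>) - (f (?\<theta>' + s *\<^sub>R axis i 1) - f ?\<theta>')"
  have "(?k has_real_derivative (g \<theta> \<bullet> axis i 1 - 0) - (g ?\<theta>' \<bullet> axis i 1 - 0)) (at 0)"
    by (intro DERIV_diff has_real_derivative_along_line DERIV_const) (simp_all add: f_deriv)
  moreover have "?k 0 \<le> ?k s" if "0 < s" for s
  proof -
    have "f (\<theta> + s *\<^sub>R axis i 1 + t *\<^sub>R axis j 1) + f \<theta>
        \<le> f (\<theta> + s *\<^sub>R axis i 1) + f ?\<theta>'"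
      using assms that unfolding decreasing_differences_def by simp
    moreover have reorder: "?\<theta>' + s *\<^sub>R axis i 1 = \<theta> + s *\<^sub>R axis i 1 + t *\<^sub>R axis j 1"
      by (simp add: algebra_simps)
    ultimately show ?thesis unfolding reorder by simp
  qed
  ultimately have "(g \<theta> \<bullet> axis i 1 - 0) - (g ?\<theta>' \<bullet> axis i 1 - 0) \<ge> 0"
    by (rule deriv_nonneg_at_right_min)
  then show ?thesis by (simp add: cart_eq_inner_axis)
qed

lemma hessian_offdiag_nonpos:
  assumes "decreasing_differences f" "i \<noteq> j"
  shows "H \<theta> $ i $ j \<le> 0"
proof -
  let ?m = "\<lambda>t. g \<theta> $ i - g (\<theta> + t *\<^sub>R axis j 1) $ i"
  have "(?m has_real_derivative 0 - (H \<theta> *v axis j 1) $ i) (at 0)"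
    using gradient_component_along_line[where a=\<theta> and s=0 and v="axis j 1" and i=i]
    by (intro DERIV_diff DERIV_const) simp
  moreover have "?m 0 \<le> ?m t" if "0 < t" for t
    using gradient_cross_antimono[OF assms, of t \<theta>] that by simp
  ultimately have "0 - (H \<theta> *v axis j 1) $ i \<ge> 0"
    by (rule deriv_nonneg_at_right_min)
  then show ?thesis by (simp add: matrix_vector_mult_basis column_def)
qed

lemma second_order_upper_bound:
  assumes "\<And>x. (H x *v e) \<bullet> e \<le> K"
  shows "f (w + e) \<le> f w + g w \<bullet> e + K / 2"
proof -
  define r where "r s = g (w + s *\<^sub>R e) \<bullet> e - g w \<bullet> e - K * s" for s
  define q where "q s = f (w + s *\<^sub>R e) - s * (g w \<bullet> e) - K / 2 * s\<^sup>2" for s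
  have r_deriv: "(r has_real_derivative (H (w + s *\<^sub>R e) *v e) \<bullet> e - K) (at s)" for s
  proof -
    have "((\<lambda>s. g (w + s *\<^sub>R e) \<bullet> e) has_real_derivative (H (w + s *\<^sub>R e) *v e) \<bullet> e) (at s)"
      by (rule has_real_derivative_along_line[OF has_derivative_inner_left[OF g_deriv]])
    then show ?thesis
      unfolding r_def[abs_def] by (auto intro!: derivative_eq_intros)
  qed
  have r_nonpos: "r s \<le> 0" if "0 \<le> s" for s
  proof -
    have "r s \<le> r 0"
    proof (rule DERIV_nonpos_imp_nonincreasing[OF that])
      fix x show "\<exists>y. DERIV r x :> y \<and> y \<le> 0"
        using r_deriv[of x] assms[of "w + x *\<^sub>R e"] by auto
    qed
    then show ?thesis by (simp add: r_def)
  qed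
  have "(q has_real_derivative r s) (at s)" for s
  proof -
    have "((\<lambda>s. f (w + s *\<^sub>R e)) has_real_derivative g (w + s *\<^sub>R e) \<bullet> e) (at s)"
      by (rule has_real_derivative_along_line[OF f_deriv])
    then show ?thesis
      unfolding q_def[abs_def] by (auto intro!: derivative_eq_intros simp: r_def)
  qed
  then have "q 1 \<le> q 0"
    using r_nonpos by (intro DERIV_nonpos_imp_nonincreasing[of 0 1 q]) auto
  then show ?thesis by (simp add: q_def)
qed

end

lemma quadratic_form_le_trace_infnorm:
  fixes A :: "real^'n^'n"
  assumes rows: "A *v (\<chi> k. 1) = 0" and offdiag: "\<And>i j. i \<noteq> j \<Longrightarrow> A $ i $ j \<le> 0"
  shows "e \<bullet> (A *v e) \<le> 2 * trace A * (infnorm e)\<^sup>2"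
proof -
  define m where "m = infnorm e"
  have row_sum: "(\<Sum>j\<in>UNIV. A $ i $ j) = 0" for i
    using arg_cong[OF rows, of "\<lambda>v. v $ i"] by (simp add: matrix_vector_mult_def)
  \<comment> \<open>zero row sums turn row \<open>i\<close> of \<open>e \<bullet> A e\<close> into \<open>\<Sum>\<^sub>j A\<^sub>i\<^sub>j e\<^sub>i (e\<^sub>j - e\<^sub>i)\<close>, where each
     off-diagonal term is at most \<open>-2 m\<^sup>2 A\<^sub>i\<^sub>j\<close>\<close>
  have row_bound: "e $ i * (\<Sum>j\<in>UNIV. A $ i $ j * e $ j) \<le> 2 * m\<^sup>2 * A $ i $ i" for i
  proof -
    have "(\<Sum>j\<in>UNIV. A $ i $ j * (e $ i * (e $ j - e $ i)))
        = e $ i * (\<Sum>j\<in>UNIV. A $ i $ j * e $ j) - e $ i * e $ i * (\<Sum>j\<in>UNIV. A $ i $ j)"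
      by (simp add: sum_distrib_left sum_subtractf algebra_simps)
    then have "e $ i * (\<Sum>j\<in>UNIV. A $ i $ j * e $ j)
        = (\<Sum>j\<in>UNIV. A $ i $ j * (e $ i * (e $ j - e $ i)))"
      using row_sum[of i] by simp
    also have "\<dots> \<le> (\<Sum>j\<in>UNIV. 2 * m\<^sup>2 * ((if j = i then A $ i $ j else 0) - A $ i $ j))"
    proof (intro sum_mono)
      fix j
      have "\<bar>e $ i\<bar> \<le> m" "\<bar>e $ j\<bar> \<le> m"
        by (simp_all add: m_def component_le_infnorm_cart)
      then have "\<bar>e $ i * (e $ j - e $ i)\<bar> \<le> m * (2 * m)"
        unfolding abs_mult by (intro mult_mono) arith+
      then have "- (2 * m\<^sup>2) \<le> e $ i * (e $ j - e $ i)"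
        by (simp add: power2_eq_square abs_le_iff)
      then have "j \<noteq> i \<Longrightarrow> A $ i $ j * (e $ i * (e $ j - e $ i)) \<le> A $ i $ j * - (2 * m\<^sup>2)"
        using offdiag[of i j] by (intro mult_left_mono_neg) auto
      then show "A $ i $ j * (e $ i * (e $ j - e $ i))
          \<le> 2 * m\<^sup>2 * ((if j = i then A $ i $ j else 0) - A $ i $ j)"
        by (cases "j = i") (simp_all add: algebra_simps)
    qed
    also have "\<dots> = 2 * m\<^sup>2 * A $ i $ i"
      using row_sum[of i] by (simp add: sum_distrib_left[symmetric] sum_subtractf)
    finally show ?thesis .
  qed
  have "e \<bullet> (A *v e) = (\<Sum>i\<in>UNIV. e $ i * (\<Sum>j\<in>UNIV. A $ i $ j * e $ j))"
    by (simp add: inner_vec_def matrix_vector_mult_def)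
  also have "\<dots> \<le> (\<Sum>i\<in>UNIV. 2 * m\<^sup>2 * A $ i $ i)"
    by (intro sum_mono row_bound)
  also have "\<dots> = 2 * trace A * m\<^sup>2"
    by (simp add: trace_def sum_distrib_left sum_distrib_right algebra_simps)
  finally show ?thesis unfolding m_def .
qed

definition vec_max :: "real^'n \<Rightarrow> real" where
  "vec_max a = (MAX j. a $ j)"

lemma component_le_vec_max: "a $ j \<le> vec_max a"
  unfolding vec_max_def by (rule Max_ge) auto

lemma vec_max_attained:
  obtains j where "vec_max a = a $ j"
proof -
  have "vec_max a \<in> range (\<lambda>j. a $ j)"
    unfolding vec_max_def by (rule Max_in) auto
  then show ?thesis using that by auto
qed

lemma vec_max_le_iff: "vec_max a \<le> c \<longleftrightarrow> (\<forall>j. a $ j \<le> c)"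
  by (metis component_le_vec_max order_trans vec_max_attained)

lemma vec_max_mono: "(\<And>j. a $ j \<le> b $ j) \<Longrightarrow> vec_max a \<le> vec_max b"
  by (meson component_le_vec_max order_trans vec_max_le_iff)

lemma vec_max_scaleR:
  assumes "c \<ge> 0"
  shows "vec_max (c *\<^sub>R a) = c * vec_max a"
proof (rule antisym)
  show "vec_max (c *\<^sub>R a) \<le> c * vec_max a"
    using assms by (simp add: vec_max_le_iff mult_left_mono component_le_vec_max)
  obtain j where "vec_max a = a $ j" by (rule vec_max_attained)
  then show "c * vec_max a \<le> vec_max (c *\<^sub>R a)"
    using component_le_vec_max[of "c *\<^sub>R a" j] by simp
qed

lemma vec_max_add_const: "vec_max (a + (\<chi> k. c)) = vec_max a + c"
proof (rule antisym)
  show "vec_max (a + (\<chi> k. c)) \<le> vec_max a + c"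
    by (simp add: vec_max_le_iff component_le_vec_max)
  obtain j where "vec_max a = a $ j" by (rule vec_max_attained)
  then show "vec_max a + c \<le> vec_max (a + (\<chi> k. c))"
    using component_le_vec_max[of "a + (\<chi> k. c)" j] by simp
qed

lemma convex_on_vec_max: "convex_on UNIV vec_max"
  by (rule convex_onI)
    (auto simp: vec_max_le_iff intro!: add_mono mult_left_mono component_le_vec_max)

lemma inner_le_vec_max:
  assumes "x \<in> prob_simplex"
  shows "x \<bullet> a \<le> vec_max a"
proof -
  have "x \<bullet> a = (\<Sum>i\<in>UNIV. x $ i * a $ i)"
    by (simp add: inner_vec_def)
  also have "\<dots> \<le> (\<Sum>i\<in>UNIV. x $ i * vec_max a)"
    using assms by (intro sum_mono mult_left_mono component_le_vec_max) (auto simp: prob_simplex_def)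
  also have "\<dots> = vec_max a"
    using assms by (simp add: prob_simplex_def sum_distrib_right[symmetric])
  finally show ?thesis .
qed

lemma decreasing_differences_vec_max: "decreasing_differences vec_max"
  unfolding decreasing_differences_def
proof (intro allI impI)
  fix a :: "real^'n" and i j :: 'n and s t :: real
  assume "i \<noteq> j" "0 \<le> s" "0 \<le> t"
  let ?a\<^sub>i = "a + s *\<^sub>R axis i 1" and ?a\<^sub>j = "a + t *\<^sub>R axis j 1"
  have "vec_max a \<le> vec_max ?a\<^sub>i" "vec_max a \<le> vec_max ?a\<^sub>j"
    using \<open>0 \<le> s\<close> \<open>0 \<le> t\<close> by (auto intro!: vec_max_mono simp: axis_def)
  \<comment> \<open>a maximising coordinate of the doubly shifted vector sees at most one of the two shifts\<close>
  moreover obtain k where "vec_max (?a\<^sub>i + t *\<^sub>R axis j 1) = (?a\<^sub>i + t *\<^sub>R axis j 1) $ k"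
    by (rule vec_max_attained)
  moreover have "(?a\<^sub>i + t *\<^sub>R axis j 1) $ k = (if k = i then ?a\<^sub>i $ k else ?a\<^sub>j $ k)"
    using \<open>i \<noteq> j\<close> by (simp add: axis_def)
  ultimately show "vec_max (?a\<^sub>i + t *\<^sub>R axis j 1) + vec_max a \<le> vec_max ?a\<^sub>i + vec_max ?a\<^sub>j"
    using component_le_vec_max[of ?a\<^sub>i k] component_le_vec_max[of ?a\<^sub>j k] by (smt (verit))
qed

lemma surplus_eq_integral_vec_max: "surplus M eps \<eta> \<theta> = (\<integral>\<omega>. vec_max (\<theta> + \<eta> *\<^sub>R eps \<omega>) \<partial>M)"
  unfolding surplus_def vec_max_def by simp

lemma surplus_rescale:
  assumes "\<eta> > 0"
  shows "surplus M eps \<eta> \<theta> = \<eta> * surplus M eps 1 ((1 / \<eta>) *\<^sub>R \<theta>)"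
proof -
  have "\<theta> + \<eta> *\<^sub>R eps \<omega> = \<eta> *\<^sub>R ((1 / \<eta>) *\<^sub>R \<theta> + 1 *\<^sub>R eps \<omega>)" for \<omega>
    using assms by (simp add: algebra_simps)
  then show ?thesis
    using assms by (simp add: surplus_eq_integral_vec_max vec_max_scaleR)
qed

locale integrable_noise = prob_space M for M :: "'a measure" +
  fixes eps :: "'a \<Rightarrow> real^'n"
  assumes integrable_component: "integrable M (\<lambda>\<omega>. eps \<omega> $ i)"
begin

lemma integrable_vec_max: "integrable M (\<lambda>\<omega>. vec_max (\<theta> + \<eta> *\<^sub>R eps \<omega>))"
  unfolding vec_max_def by (auto intro!: integrable_MAX integrable_component)

lemma surplus_add_const: "surplus M eps \<eta> (\<theta> + (\<chi> k. c)) = surplus M eps \<eta> \<theta> + c"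
proof -
  have "vec_max (\<theta> + (\<chi> k. c) + \<eta> *\<^sub>R eps \<omega>) = vec_max (\<theta> + \<eta> *\<^sub>R eps \<omega>) + c" for \<omega>
    using vec_max_add_const[of "\<theta> + \<eta> *\<^sub>R eps \<omega>" c] by (simp add: algebra_simps)
  then show ?thesis
    using integrable_vec_max by (simp add: surplus_eq_integral_vec_max prob_space)
qed

lemma convex_on_surplus: "convex_on UNIV (surplus M eps \<eta>)"
proof -
  have "convex_on UNIV (\<lambda>\<theta>. vec_max (\<theta> + \<eta> *\<^sub>R eps \<omega>))" for \<omega>
    by (rule convex_on_shift[OF convex_on_vec_max])
  then show ?thesis
    unfolding surplus_eq_integral_vec_max[abs_def] by (intro convex_on_integral integrable_vec_max)
qed

lemma decreasing_differences_surplus: "decreasing_differences (surplus M eps \<eta>)"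
proof -
  have "decreasing_differences (\<lambda>\<theta>. vec_max (\<theta> + \<eta> *\<^sub>R eps \<omega>))" for \<omega>
    by (rule decreasing_differences_shift[OF decreasing_differences_vec_max])
  then show ?thesis
    unfolding surplus_eq_integral_vec_max[abs_def]
    by (intro decreasing_differences_integral integrable_vec_max)
qed

lemma inner_le_surplus:
  assumes mean_zero: "\<And>i. (\<integral>\<omega>. eps \<omega> $ i \<partial>M) = 0" and "x \<in> prob_simplex"
  shows "x \<bullet> \<theta> \<le> surplus M eps \<eta> \<theta>"
proof -
  have "x \<bullet> (\<theta> + \<eta> *\<^sub>R eps \<omega>) = x \<bullet> \<theta> + \<eta> * (\<Sum>i\<in>UNIV. x $ i * eps \<omega> $ i)" for \<omega>
    by (simp add: inner_add_right inner_vec_def sum_distrib_left sum.distrib algebra_simps)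
  then have mean: "(\<integral>\<omega>. x \<bullet> (\<theta> + \<eta> *\<^sub>R eps \<omega>) \<partial>M) = x \<bullet> \<theta>"
    using mean_zero integrable_component by (simp add: prob_space integral_sum)
  have "(\<integral>\<omega>. x \<bullet> (\<theta> + \<eta> *\<^sub>R eps \<omega>) \<partial>M) \<le> surplus M eps \<eta> \<theta>"
    unfolding surplus_eq_integral_vec_max using \<open>x \<in> prob_simplex\<close>
    by (intro integral_mono integrable_vec_max inner_le_vec_max)
      (auto simp: inner_vec_def intro!: integrable_sum integrable_mult_right
        Bochner_Integration.integrable_add integrable_component)
  then show ?thesis unfolding mean .
qed

lemma surplus_unit_smooth:
  assumes C2: "C2_with (surplus M eps 1) g H" and trace_bound: "\<And>\<theta>. 2 * trace (H \<theta>) \<le> L"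
  shows "surplus M eps 1 (w + e) \<le> surplus M eps 1 w + g w \<bullet> e + L / 2 * (infnorm e)\<^sup>2"
proof -
  have f_deriv: "\<And>\<theta>. (surplus M eps 1 has_derivative (\<lambda>h. g \<theta> \<bullet> h)) (at \<theta>)"
    and g_deriv: "\<And>\<theta>. (g has_derivative (\<lambda>h. H \<theta> *v h)) (at \<theta>)"
    using C2 by (simp_all add: C2_with_def)
  have "(H x *v e) \<bullet> e \<le> L * (infnorm e)\<^sup>2" for x
  proof -
    have "(H x *v e) \<bullet> e \<le> 2 * trace (H x) * (infnorm e)\<^sup>2"
      using quadratic_form_le_trace_infnorm
          [OF hessian_mult_ones_eq_zero[OF f_deriv g_deriv surplus_add_const]
            hessian_offdiag_nonpos[OF f_deriv g_deriv decreasing_differences_surplus]]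
      by (simp add: inner_commute)
    also have "\<dots> \<le> L * (infnorm e)\<^sup>2"
      using trace_bound by (intro mult_right_mono) auto
    finally show ?thesis .
  qed
  from second_order_upper_bound[OF f_deriv g_deriv this] show ?thesis by simp
qed

lemma surplus_smooth:
  assumes "hessian_trace_bound M eps L" and "\<eta> > 0"
    and D: "(surplus M eps \<eta> has_derivative (\<lambda>h. D \<bullet> h)) (at y)"
  shows "surplus M eps \<eta> (y + e) \<le> surplus M eps \<eta> y + D \<bullet> e + L / (2 * \<eta>) * (infnorm e)\<^sup>2"
proof -
  obtain g H where C2: "C2_with (surplus M eps 1) g H"
    and trace_bound: "\<And>\<theta>. 2 * trace (H \<theta>) \<le> L"
    using assms(1) unfolding hessian_trace_bound_def by blast
  let ?w = "(1 / \<eta>) *\<^sub>R y"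
  have rescaled: "surplus M eps \<eta> = (\<lambda>\<theta>. \<eta> * surplus M eps 1 ((1 / \<eta>) *\<^sub>R \<theta>))"
    using surplus_rescale[OF \<open>\<eta> > 0\<close>] by blast
  have "(surplus M eps 1 has_derivative (\<lambda>h. g ?w \<bullet> h)) (at ?w)"
    using C2 by (simp add: C2_with_def)
  then have "(surplus M eps \<eta> has_derivative (\<lambda>h. \<eta> * (g ?w \<bullet> ((1 / \<eta>) *\<^sub>R h)))) (at y)"
    unfolding rescaled
    by (intro has_derivative_mult_right
        has_derivative_compose[OF has_derivative_scaleR_right[OF has_derivative_ident]])
  then have "(\<lambda>h. D \<bullet> h) = (\<lambda>h. g ?w \<bullet> h)"
    using has_derivative_unique[OF D] \<open>\<eta> > 0\<close> by simp
  then have "D = g ?w" by (metis vector_eq_rdot)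
  have "surplus M eps \<eta> (y + e) = \<eta> * surplus M eps 1 (?w + (1 / \<eta>) *\<^sub>R e)"
    using surplus_rescale[OF \<open>\<eta> > 0\<close>, of M eps "y + e"] by (simp add: scaleR_add_right)
  also have "\<dots> \<le> \<eta> * (surplus M eps 1 ?w + g ?w \<bullet> ((1 / \<eta>) *\<^sub>R e)
      + L / 2 * (infnorm ((1 / \<eta>) *\<^sub>R e))\<^sup>2)"
    using \<open>\<eta> > 0\<close> by (intro mult_left_mono[OF surplus_unit_smooth[OF C2 trace_bound]]) simp
  also have "\<dots> = surplus M eps \<eta> y + D \<bullet> e + L / (2 * \<eta>) * (infnorm e)\<^sup>2"
    using \<open>\<eta> > 0\<close> \<open>D = g ?w\<close> surplus_rescale[OF \<open>\<eta> > 0\<close>, of M eps y]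
    by (simp add: infnorm_mul power_mult_distrib power2_eq_square field_simps)
  finally show ?thesis .
qed

end

lemma noise_assumption_integrable_noise: "noise_assumption M eps \<Longrightarrow> integrable_noise M eps"
  unfolding noise_assumption_def integrable_noise_def integrable_noise_axioms_def by blast

lemma optimistic_ftrl_regret:
  fixes F :: "'v::euclidean_space \<Rightarrow> real" and u \<beta> x :: "nat \<Rightarrow> 'v"
  assumes convex: "convex_on UNIV F"
    and smooth: "\<And>y D e. (F has_derivative (\<lambda>h. D \<bullet> h)) (at y) \<Longrightarrow>
                   F (y + e) \<le> F y + D \<bullet> e + K * (infnorm e)\<^sup>2"
    and choice: "\<And>t. t \<in> {1..T} \<Longrightarrow>
                   (F has_derivative (\<lambda>h. x t \<bullet> h)) (at ((\<Sum>s\<in>{1..t-1}. u s) + \<beta> t))"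
    and dominates: "\<And>\<theta>. xstar \<bullet> \<theta> \<le> F \<theta>"
  shows "(\<Sum>t\<in>{1..T}. (xstar - x t) \<bullet> u t) \<le> F 0 + K * (\<Sum>t\<in>{1..T}. (infnorm (u t - \<beta> t))\<^sup>2)"
proof -
  define \<Theta> where "\<Theta> n = (\<Sum>s\<in>{1..n}. u s)" for n
  define c where "c t = K * (infnorm (u t - \<beta> t))\<^sup>2" for t
  have step: "F (\<Theta> (Suc n)) \<le> F (\<Theta> n) + x (Suc n) \<bullet> u (Suc n) + c (Suc n)" if "Suc n \<le> T" for n
  proof -
    let ?y = "\<Theta> n + \<beta> (Suc n)"
    have grad: "(F has_derivative (\<lambda>h. x (Suc n) \<bullet> h)) (at ?y)"
      using choice[of "Suc n"] that by (simp add: \<Theta>_def)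
    have "F ?y + x (Suc n) \<bullet> (\<Theta> n - ?y) \<le> F (\<Theta> n)"
      by (rule convex_on_gradient_inequality[OF convex grad])
    moreover have "F (?y + (u (Suc n) - \<beta> (Suc n)))
        \<le> F ?y + x (Suc n) \<bullet> (u (Suc n) - \<beta> (Suc n)) + c (Suc n)"
      unfolding c_def by (rule smooth[OF grad])
    moreover have "?y + (u (Suc n) - \<beta> (Suc n)) = \<Theta> (Suc n)"
      by (simp add: \<Theta>_def)
    ultimately show ?thesis by (simp add: inner_diff_right)
  qed
  have telescope: "F (\<Theta> n) \<le> F 0 + (\<Sum>t\<in>{1..n}. x t \<bullet> u t + c t)" if "n \<le> T" for n
    using that
  proof (induction n)
    case 0
    then show ?case by (simp add: \<Theta>_def)
  next
    case (Suc n)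
    then show ?case using step[of n] by simp
  qed
  have "(\<Sum>t\<in>{1..T}. (xstar - x t) \<bullet> u t) = xstar \<bullet> \<Theta> T - (\<Sum>t\<in>{1..T}. x t \<bullet> u t)"
    by (simp add: \<Theta>_def inner_diff_left sum_subtractf inner_sum_right)
  also have "\<dots> \<le> F 0 + (\<Sum>t\<in>{1..T}. c t)"
    using telescope[of T] dominates[of "\<Theta> T"] by (simp add: sum.distrib)
  finally show ?thesis
    by (simp add: c_def sum_distrib_left)
qed

theorem mainTheorem12:
  fixes M :: "'a measure" and eps :: "'a \<Rightarrow> real^'n"
    and \<eta> L :: real and T :: nat
    and u \<beta> x :: "nat \<Rightarrow> real^'n" and xstar :: "real^'n"
  assumes "CARD('n) \<ge> 2"
    and "noise_assumption M eps"
    and "hessian_trace_bound M eps L"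
    and "\<eta> > 0"
    and "\<And>t. t \<in> {1..T} \<Longrightarrow>
           (surplus M eps \<eta> has_derivative (\<lambda>h. x t \<bullet> h))
             (at ((\<Sum>s\<in>{1..t-1}. u s) + \<beta> t))"
    and "xstar \<in> prob_simplex"
  shows "(\<Sum>t\<in>{1..T}. (xstar - x t) \<bullet> u t)
           \<le> \<eta> * surplus M eps 1 0 + L / (2 * \<eta>) * (\<Sum>t\<in>{1..T}. (infnorm (u t - \<beta> t))\<^sup>2)"
proof -
  interpret integrable_noise M eps
    using assms(2) by (rule noise_assumption_integrable_noise)
  have mean_zero: "\<And>i. (\<integral>\<omega>. eps \<omega> $ i \<partial>M) = 0"
    using assms(2) by (simp add: noise_assumption_def)
  have "(\<Sum>t\<in>{1..T}. (xstar - x t) \<bullet> u t)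
      \<le> surplus M eps \<eta> 0 + L / (2 * \<eta>) * (\<Sum>t\<in>{1..T}. (infnorm (u t - \<beta> t))\<^sup>2)"
    by (rule optimistic_ftrl_regret[OF convex_on_surplus surplus_smooth[OF assms(3,4)] assms(5)
          inner_le_surplus[OF mean_zero assms(6)]])
  then show ?thesis
    using surplus_rescale[OF assms(4), of M eps 0] by simp
qed

end
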